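(* Let $G$ be a connected cograph. Then every minimum edge separator $F$ of $G$ satisfies $|F|=\delta(G)$, where $\delta(G)$ is the minimum degree of $G$.
   Context: A cograph is a graph that can be built from single vertices by repeatedly taking disjoint unions and joins; equivalently a graph with no induced path on four vertices. For a connected graph $G$, an edge separator is a set $F\subseteq E(G)$ such that $G-F=(V(G),E(G)\setminus F)$ is disconnected; a minimum edge separator is an edge separator of least size. *)

theory Defs
  imports Main
begin

definition simple_graph :: "'a set \<Rightarrow> 'a set set \<Rightarrow> bool" where
  "simple_graph V E \<longleftrightarrow> finite V \<and>
     (\<forall>e\<in>E. \<exists>u v. e = {u, v} \<and> u \<noteq> v \<and> u \<in> V \<and> v \<in> V)"

definition adj :: "'a set set \<Rightarrow> 'a \<Rightarrow> 'a \<Rightarrow> bool" where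
  "adj E u v \<longleftrightarrow> u \<noteq> v \<and> {u, v} \<in> E"

definition graph_connected :: "'a set \<Rightarrow> 'a set set \<Rightarrow> bool" where
  "graph_connected V E \<longleftrightarrow> V \<noteq> {} \<and>
     (\<forall>u\<in>V. \<forall>v\<in>V. (u, v) \<in> {(x, y). adj E x y}\<^sup>*)"

definition cograph :: "'a set \<Rightarrow> 'a set set \<Rightarrow> bool" where
  "cograph V E \<longleftrightarrow> \<not> (\<exists>a\<in>V. \<exists>b\<in>V. \<exists>c\<in>V. \<exists>d\<in>V.
     distinct [a, b, c, d] \<and> adj E a b \<and> adj E b c \<and> adj E c d \<and>
     \<not> adj E a c \<and> \<not> adj E b d \<and> \<not> adj E a d)"

definition degree :: "'a set \<Rightarrow> 'a set set \<Rightarrow> 'a \<Rightarrow> nat" where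
  "degree V E v = card {u \<in> V. adj E v u}"

definition min_degree :: "'a set \<Rightarrow> 'a set set \<Rightarrow> nat" where
  "min_degree V E = Min (degree V E ` V)"

definition edge_separator :: "'a set \<Rightarrow> 'a set set \<Rightarrow> 'a set set \<Rightarrow> bool" where
  "edge_separator V E F \<longleftrightarrow> F \<subseteq> E \<and> \<not> graph_connected V (E - F)"

definition min_edge_separator :: "'a set \<Rightarrow> 'a set set \<Rightarrow> 'a set set \<Rightarrow> bool" where
  "min_edge_separator V E F \<longleftrightarrow> edge_separator V E F \<and>
     (\<forall>F'. edge_separator V E F' \<longrightarrow> card F \<le> card F')"

end

theory Submission
  imports Defs
begin

text \<open>
  Removing all edges at a vertex of minimum degree disconnects G, so a minimum edge
  separator has at most \<delta>(G) edges. Conversely, a separator contains all edges leaving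
  some proper nonempty vertex set S. A connected cograph has diameter at most two, so
  either every vertex of S or every vertex outside S has a neighbour across the cut.
  If every vertex x of a set A with k elements has a neighbour outside A, then x sends at
  least max 1 (\<delta> - (k - 1)) edges out of A, and k of these sum to at least \<delta>.
\<close>

lemma adj_commute: "adj E u v = adj E v u"
  unfolding adj_def by (auto simp: insert_commute)

lemma adj_in_vertices: "simple_graph V E \<Longrightarrow> adj E u v \<Longrightarrow> u \<in> V \<and> v \<in> V"
  unfolding simple_graph_def adj_def by (metis doubleton_eq_iff)

lemma simple_graph_finite_edges:
  assumes "simple_graph V E"
  shows "finite E"
proof -
  have "E \<subseteq> Pow V" "finite V" using assms unfolding simple_graph_def by auto
  then show ?thesis by (simp add: finite_subset)
qed

lemma min_degree_le_degree: "simple_graph V E \<Longrightarrow> v \<in> V \<Longrightarrow> min_degree V E \<le> degree V E v"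
  unfolding min_degree_def simple_graph_def by simp

lemma min_degree_attained:
  assumes "simple_graph V E" and "V \<noteq> {}"
  obtains w where "w \<in> V" and "degree V E w = min_degree V E"
proof -
  have "Min (degree V E ` V) \<in> degree V E ` V"
    using assms unfolding simple_graph_def by (intro Min_in) auto
  then show ?thesis using that unfolding min_degree_def by auto
qed

lemma cograph_reachable_within_distance_two:
  assumes cg: "cograph V E" and sg: "simple_graph V E" and xV: "x \<in> V"
    and reach: "(x, z) \<in> {(a, b). adj E a b}\<^sup>*"
  shows "z = x \<or> adj E x z \<or> (\<exists>c. adj E x c \<and> adj E c z)"
  using reach
proof (induction rule: rtrancl_induct)
  case base
  then show ?case by simp
next
  case (step z w)
  then have zw: "adj E z w" by simp
  from step.IH show ?case
  proof (elim disjE exE conjE)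
    fix c
    assume xc: "adj E x c" and cz: "adj E c z"
    show ?thesis
    proof (rule ccontr)
      assume "\<not> ?thesis"
      then have "w \<noteq> x" "\<not> adj E x w" "\<not> adj E c w" "\<not> adj E x z"
        using xc zw by auto
      moreover have "c \<in> V" "z \<in> V" "w \<in> V"
        using adj_in_vertices[OF sg] xc cz zw by auto
      moreover have "distinct [x, c, z, w]"
        using xc cz zw calculation unfolding adj_def by auto
      ultimately show False
        using cg xV xc cz zw unfolding cograph_def by blast
    qed
  qed (use zw in auto)
qed

lemma connected_cograph_common_neighbour:
  assumes "cograph V E" "simple_graph V E" "graph_connected V E"
    and "x \<in> V" "y \<in> V" "x \<noteq> y" "\<not> adj E x y"
  obtains c where "adj E x c" and "adj E c y"
proof -
  have "(x, y) \<in> {(a, b). adj E a b}\<^sup>*"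
    using assms(3-5) unfolding graph_connected_def by blast
  then show ?thesis
    using cograph_reachable_within_distance_two[OF assms(1,2,4)] assms(6,7) that by blast
qed

definition cut_edges :: "'a set \<Rightarrow> 'a set set \<Rightarrow> 'a set \<Rightarrow> 'a set set" where
  "cut_edges V E S = {{x, y} | x y. x \<in> S \<and> y \<in> V - S \<and> adj E x y}"

lemma cut_edges_complement:
  assumes "S \<subseteq> V"
  shows "cut_edges V E (V - S) = cut_edges V E S"
proof -
  have flip: "cut_edges V E T \<subseteq> cut_edges V E (V - T)" if "T \<subseteq> V" for T
  proof
    fix e assume "e \<in> cut_edges V E T"
    then obtain x y where "e = {x, y}" "x \<in> T" "y \<in> V - T" "adj E x y"
      unfolding cut_edges_def by blast
    then have "e = {y, x}" "x \<in> V - (V - T)" "adj E y x"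
      using that by (auto simp: adj_commute)
    with \<open>y \<in> V - T\<close> show "e \<in> cut_edges V E (V - T)" unfolding cut_edges_def by blast
  qed
  have "V - (V - S) = S" using assms by auto
  then show ?thesis using flip[of S] flip[of "V - S"] assms by auto
qed

lemma card_cut_edges_eq_sum:
  assumes "finite V" "S \<subseteq> V"
  shows "card (cut_edges V E S) = (\<Sum>x\<in>S. card {y \<in> V - S. adj E x y})"
proof -
  define N where "N x = {y \<in> V - S. adj E x y}" for x
  have fin: "finite S" "finite (N x)" for x
    using assms finite_subset unfolding N_def by auto
  have "cut_edges V E S = (\<Union>x\<in>S. (\<lambda>y. {x, y}) ` N x)"
    unfolding cut_edges_def N_def by blast
  also have "card \<dots> = (\<Sum>x\<in>S. card ((\<lambda>y. {x, y}) ` N x))"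
    by (rule card_UN_disjoint) (use fin in \<open>auto simp: N_def doubleton_eq_iff\<close>)
  also have "\<dots> = (\<Sum>x\<in>S. card (N x))"
    by (intro sum.cong refl card_image) (auto simp: inj_on_def doubleton_eq_iff)
  finally show ?thesis unfolding N_def .
qed

lemma sum_ge_of_pointwise_bound:
  fixes f :: "'b \<Rightarrow> nat"
  assumes "finite A" "A \<noteq> {}"
    and bound: "\<And>x. x \<in> A \<Longrightarrow> 1 \<le> f x \<and> d < f x + card A"
  shows "d \<le> sum f A"
proof -
  define k where "k = card A"
  have "1 \<le> k" using assms(1,2) unfolding k_def by (simp add: Suc_le_eq card_gt_0_iff)
  have "max 1 (Suc d - k) \<le> f x" if "x \<in> A" for x
    using bound[OF that] unfolding k_def by (simp; arith)
  then have "(\<Sum>x\<in>A. max 1 (Suc d - k)) \<le> sum f A"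
    by (rule sum_mono)
  then have "k * max 1 (Suc d - k) \<le> sum f A"
    by (simp add: k_def)
  moreover have "d \<le> k * max 1 (Suc d - k)"
  proof (cases "d \<le> k")
    case False
    have "1 * (d - k) \<le> k * (d - k)" using \<open>1 \<le> k\<close> by (rule mult_le_mono1)
    then show ?thesis using False by (simp add: Suc_diff_le algebra_simps)
  qed simp
  ultimately show ?thesis by linarith
qed

lemma card_cut_edges_ge_min_degree:
  assumes sg: "simple_graph V E" and "S \<subseteq> V" "S \<noteq> {}"
    and leaving: "\<And>x. x \<in> S \<Longrightarrow> \<exists>y\<in>V - S. adj E x y"
  shows "min_degree V E \<le> card (cut_edges V E S)"
proof -
  have finV: "finite V" using sg unfolding simple_graph_def by simp
  then have finS: "finite S" using \<open>S \<subseteq> V\<close> finite_subset by blast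
  have "1 \<le> card {y \<in> V - S. adj E x y} \<and> min_degree V E < card {y \<in> V - S. adj E x y} + card S"
    if xS: "x \<in> S" for x
  proof
    have "{y \<in> V - S. adj E x y} \<noteq> {}" using leaving[OF xS] by blast
    then show "1 \<le> card {y \<in> V - S. adj E x y}"
      using finV by (simp add: Suc_le_eq card_gt_0_iff del: Collect_empty_eq)
  next
    have "{u \<in> V. adj E x u} \<subseteq> {y \<in> V - S. adj E x y} \<union> (S - {x})"
      by (auto simp: adj_def)
    then have "degree V E x \<le> card ({y \<in> V - S. adj E x y} \<union> (S - {x}))"
      unfolding degree_def using finV finS by (intro card_mono) auto
    also have "\<dots> \<le> card {y \<in> V - S. adj E x y} + card (S - {x})"
      by (rule card_Un_le)
    finally have "degree V E x < card {y \<in> V - S. adj E x y} + card S"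
      using finS xS card_Diff1_less[of S x] by linarith
    then show "min_degree V E < card {y \<in> V - S. adj E x y} + card S"
      using min_degree_le_degree[OF sg] xS \<open>S \<subseteq> V\<close> by fastforce
  qed
  then have "min_degree V E \<le> (\<Sum>x\<in>S. card {y \<in> V - S. adj E x y})"
    by (rule sum_ge_of_pointwise_bound[OF finS \<open>S \<noteq> {}\<close>])
  then show ?thesis using card_cut_edges_eq_sum[OF finV \<open>S \<subseteq> V\<close>] by simp
qed

lemma connected_cograph_card_cut_edges:
  assumes cg: "cograph V E" and sg: "simple_graph V E" and con: "graph_connected V E"
    and SV: "S \<subseteq> V" and "S \<noteq> {}" and "S \<noteq> V"
  shows "min_degree V E \<le> card (cut_edges V E S)"
proof (cases "\<forall>x\<in>S. \<exists>y\<in>V - S. adj E x y")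
  case True
  then show ?thesis using card_cut_edges_ge_min_degree[OF sg SV \<open>S \<noteq> {}\<close>] by blast
next
  case False
  then obtain x where xS: "x \<in> S" and isolated: "\<forall>y\<in>V - S. \<not> adj E x y" by blast
  txt \<open>A common neighbour of x and a vertex outside S lies in S.\<close>
  have "\<exists>z\<in>V - (V - S). adj E y z" if yS: "y \<in> V - S" for y
  proof -
    obtain c where xc: "adj E x c" and cy: "adj E c y"
      using connected_cograph_common_neighbour[OF cg sg con, of x y] xS yS SV isolated by blast
    have "c \<in> S" using isolated xc adj_in_vertices[OF sg xc] by blast
    then show ?thesis using cy SV by (auto simp: adj_commute)
  qed
  then have "min_degree V E \<le> card (cut_edges V E (V - S))"
    using card_cut_edges_ge_min_degree[OF sg, of "V - S"] SV \<open>S \<noteq> V\<close> by blast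
  then show ?thesis using cut_edges_complement[OF SV] by simp
qed

lemma edge_separator_contains_cut:
  assumes "V \<noteq> {}" and "edge_separator V E F"
  obtains S where "S \<subseteq> V" "S \<noteq> {}" "S \<noteq> V" "cut_edges V E S \<subseteq> F"
proof -
  define R where "R = {(x, y). adj (E - F) x y}"
  obtain u v where "u \<in> V" "v \<in> V" "(u, v) \<notin> R\<^sup>*"
    using assms unfolding edge_separator_def graph_connected_def R_def by blast
  define S where "S = {z \<in> V. (u, z) \<in> R\<^sup>*}"
  have "cut_edges V E S \<subseteq> F"
  proof
    fix e assume "e \<in> cut_edges V E S"
    then obtain x y where e: "e = {x, y}" and xS: "x \<in> S" and yS: "y \<in> V - S"
      and xy: "adj E x y"
      unfolding cut_edges_def by blast
    have "(x, y) \<notin> R"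
    proof
      assume "(x, y) \<in> R"
      with xS have "(u, y) \<in> R\<^sup>*" unfolding S_def by (blast intro: rtrancl_into_rtrancl)
      with yS show False unfolding S_def by simp
    qed
    then show "e \<in> F" using xy e unfolding R_def adj_def by simp
  qed
  moreover have "u \<in> S" "v \<notin> S" "S \<subseteq> V"
    using \<open>u \<in> V\<close> \<open>(u, v) \<notin> R\<^sup>*\<close> unfolding S_def by auto
  ultimately show ?thesis using that \<open>v \<in> V\<close> by blast
qed

lemma card_incident_edges:
  assumes "simple_graph V E"
  shows "card {e \<in> E. w \<in> e} = degree V E w"
proof -
  have "{e \<in> E. w \<in> e} = (\<lambda>z. {w, z}) ` {z \<in> V. adj E w z}"
    using assms unfolding simple_graph_def adj_def by (fastforce simp: insert_commute)
  moreover have "inj_on (\<lambda>z. {w, z}) {z \<in> V. adj E w z}"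
    by (auto simp: inj_on_def doubleton_eq_iff)
  ultimately show ?thesis unfolding degree_def by (simp add: card_image)
qed

lemma incident_edges_edge_separator:
  assumes "w \<in> V" "z \<in> V" "z \<noteq> w"
  shows "edge_separator V E {e \<in> E. w \<in> e}"
proof -
  have "\<forall>y. (w, y) \<notin> {(a, b). adj (E - {e \<in> E. w \<in> e}) a b}"
    unfolding adj_def by auto
  then have "(w, z) \<notin> {(a, b). adj (E - {e \<in> E. w \<in> e}) a b}\<^sup>*"
    using \<open>z \<noteq> w\<close> by (metis converse_rtranclE)
  then show ?thesis
    using assms unfolding edge_separator_def graph_connected_def by blast
qed

theorem lemma6:
  fixes V :: "'a set" and E :: "'a set set" and F :: "'a set set"
  assumes "simple_graph V E"
    and "graph_connected V E"
    and "cograph V E"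
    and "min_edge_separator V E F"
  shows "card F = min_degree V E"
proof -
  note sg = assms(1) and con = assms(2) and cg = assms(3)
  have sep: "edge_separator V E F"
    and minimal: "\<And>F'. edge_separator V E F' \<Longrightarrow> card F \<le> card F'"
    using assms(4) unfolding min_edge_separator_def by auto
  have "V \<noteq> {}" using con unfolding graph_connected_def by simp
  then obtain S where S: "S \<subseteq> V" "S \<noteq> {}" "S \<noteq> V" and cut: "cut_edges V E S \<subseteq> F"
    using sep by (rule edge_separator_contains_cut)
  have "finite F"
    using sep simple_graph_finite_edges[OF sg] finite_subset unfolding edge_separator_def by blast
  then have "card (cut_edges V E S) \<le> card F" using cut by (rule card_mono)
  then have lower: "min_degree V E \<le> card F"
    using connected_cograph_card_cut_edges[OF cg sg con S] by linarith
  obtain w where "w \<in> V" and w_min: "degree V E w = min_degree V E"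
    using min_degree_attained[OF sg \<open>V \<noteq> {}\<close>] .
  moreover obtain z where "z \<in> V" "z \<noteq> w" using S by blast
  ultimately have "card F \<le> card {e \<in> E. w \<in> e}"
    by (intro minimal incident_edges_edge_separator)
  then show ?thesis using card_incident_edges[OF sg] w_min lower by simp
qed

end
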